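(* Let $(S,\mu)$ be a complete positive measure space which is non-atomic. (i) If $\mu$ is $\sigma$-finite and $X$ is a real Banach space whose norm is Fréchet differentiable, then $L^1(\mu,X)$ has no non-zero left symmetric point. (ii) If $X$ is a real Banach space whose norm is Fréchet differentiable, then $L^1(\mu,X)$ has no non-zero right symmetric point. (iii) If $X$ is a Banach space whose norm is Fréchet differentiable and $1<p<\infty$, $p\neq2$, then $L^p(\mu,X)$ has no non-zero left symmetric point and no non-zero right symmetric point.
   Context: $L^p(\mu,X)$ ($1\le p<\infty$) is the Lebesgue–Bochner space of (classes of a.e. equal) strongly measurable $f:S\to X$ with $\int_S\|f(s)\|^p\,d\mu(s)<\infty$, normed by the $p$-th root of this integral. The measure is non-atomic if there is no atom, i.e. no measurable $A$ with $\mu(A)>0$ such that every measurable $B\subseteq A$ has $\mu(B)=0$ or $\mu(B)=\mu(A)$. In a normed space $Y$ over $\mathbb{K}$, $x\perp_{BJ}y$ means $\|x+\lambda y\|\ge\|x\|$ for all $\lambda\in\mathbb{K}$; $x$ is a left symmetric point if $x\perp_{BJ}y$ implies $y\perp_{BJ}x$ for all $y$, and a right symmetric point if $y\perp_{BJ}x$ implies $x\perp_{BJ}y$ for all $y$. The norm of $X$ is Fréchet differentiable if for every non-zero $x$ there is $\varphi\in X^*$ with $\lim_{h\to0}\big|\|x+h\|-\|x\|-\varphi(h)\big|/\|h\|=0$. *)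

theory Defs
  imports "HOL-Analysis.Analysis"
begin

definition non_atomic :: "'a measure \<Rightarrow> bool" where
  "non_atomic M \<longleftrightarrow> \<not> (\<exists>A\<in>sets M. emeasure M A > 0 \<and>
      (\<forall>B\<in>sets M. B \<subseteq> A \<longrightarrow> emeasure M B = 0 \<or> emeasure M B = emeasure M A))"

text \<open>Strong (Bochner) measurability: a.e. limit of measurable simple functions.
  No separability assumption on the Banach space is imposed.\<close>
definition strongly_measurable :: "'a measure \<Rightarrow> ('a \<Rightarrow> 'b::real_normed_vector) \<Rightarrow> bool" where
  "strongly_measurable M f \<longleftrightarrow>
     (\<exists>s. (\<forall>n. simple_function M (s n)) \<and> (AE x in M. (\<lambda>n. s n x) \<longlonglongrightarrow> f x))"

text \<open>Representatives of elements of the Lebesgue--Bochner space L^p(M,X).\<close>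
definition Lp :: "'a measure \<Rightarrow> real \<Rightarrow> ('a \<Rightarrow> 'b::real_normed_vector) set" where
  "Lp M p = {f. strongly_measurable M f \<and> (\<integral>\<^sup>+ x. ennreal (norm (f x) powr p) \<partial>M) < \<infinity>}"

definition Lp_norm :: "'a measure \<Rightarrow> real \<Rightarrow> ('a \<Rightarrow> 'b::real_normed_vector) \<Rightarrow> real" where
  "Lp_norm M p f = (enn2real (\<integral>\<^sup>+ x. ennreal (norm (f x) powr p) \<partial>M)) powr (1 / p)"

definition Lp_bj :: "'a measure \<Rightarrow> real \<Rightarrow> ('a \<Rightarrow> 'b::real_normed_vector) \<Rightarrow> ('a \<Rightarrow> 'b) \<Rightarrow> bool" where
  "Lp_bj M p f g \<longleftrightarrow> (\<forall>c::real. Lp_norm M p (\<lambda>x. f x + c *\<^sub>R g x) \<ge> Lp_norm M p f)"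

definition Lp_left_symmetric :: "'a measure \<Rightarrow> real \<Rightarrow> ('a \<Rightarrow> 'b::real_normed_vector) \<Rightarrow> bool" where
  "Lp_left_symmetric M p f \<longleftrightarrow> (\<forall>g\<in>Lp M p. Lp_bj M p f g \<longrightarrow> Lp_bj M p g f)"

definition Lp_right_symmetric :: "'a measure \<Rightarrow> real \<Rightarrow> ('a \<Rightarrow> 'b::real_normed_vector) \<Rightarrow> bool" where
  "Lp_right_symmetric M p f \<longleftrightarrow> (\<forall>g\<in>Lp M p. Lp_bj M p g f \<longrightarrow> Lp_bj M p f g)"

text \<open>Complex Banach spaces are modelled as real Banach spaces together with a complex
  structure J (multiplication by i) compatible with the norm: |a+ib| scaling.\<close>
definition complex_structure :: "('b::real_normed_vector \<Rightarrow> 'b) \<Rightarrow> bool" where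
  "complex_structure J \<longleftrightarrow> linear J \<and> (\<forall>x. J (J x) = - x) \<and>
     (\<forall>(a::real) (b::real) x. norm (a *\<^sub>R x + b *\<^sub>R J x) = cmod (Complex a b) * norm x)"

definition cscale :: "('b::real_normed_vector \<Rightarrow> 'b) \<Rightarrow> complex \<Rightarrow> 'b \<Rightarrow> 'b" where
  "cscale J c x = Re c *\<^sub>R x + Im c *\<^sub>R J x"

definition Lp_bjC :: "('b::real_normed_vector \<Rightarrow> 'b) \<Rightarrow> 'a measure \<Rightarrow> real \<Rightarrow> ('a \<Rightarrow> 'b) \<Rightarrow> ('a \<Rightarrow> 'b) \<Rightarrow> bool" where
  "Lp_bjC J M p f g \<longleftrightarrow> (\<forall>c::complex. Lp_norm M p (\<lambda>x. f x + cscale J c (g x)) \<ge> Lp_norm M p f)"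

definition Lp_left_symmetricC :: "('b::real_normed_vector \<Rightarrow> 'b) \<Rightarrow> 'a measure \<Rightarrow> real \<Rightarrow> ('a \<Rightarrow> 'b) \<Rightarrow> bool" where
  "Lp_left_symmetricC J M p f \<longleftrightarrow> (\<forall>g\<in>Lp M p. Lp_bjC J M p f g \<longrightarrow> Lp_bjC J M p g f)"

definition Lp_right_symmetricC :: "('b::real_normed_vector \<Rightarrow> 'b) \<Rightarrow> 'a measure \<Rightarrow> real \<Rightarrow> ('a \<Rightarrow> 'b) \<Rightarrow> bool" where
  "Lp_right_symmetricC J M p f \<longleftrightarrow> (\<forall>g\<in>Lp M p. Lp_bjC J M p g f \<longrightarrow> Lp_bjC J M p f g)"

definition frechet_norm :: "'b::real_normed_vector itself \<Rightarrow> bool" where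
  "frechet_norm _ \<longleftrightarrow> (\<forall>x::'b. x \<noteq> 0 \<longrightarrow> norm differentiable (at x))"

end

(*
  Every f with nonzero norm in L^p(mu,X) spans, together with a measurable set A, the
  two-dimensional subspace of the functions x |-> (if x in A then alpha else beta) f(x). Its
  norm is (|alpha|^p a + |beta|^p b)^(1/p), where a and b are the integrals of |f|^p over A
  and over its complement. As the measure |f|^p d mu inherits non-atomicity, A can be chosen
  with 0 < a < b.

  In this weighted plane, at a point with positive coordinates (x, y), Birkhoff-James
  orthogonality to (u, w) means that the slope a x^(p-1) u + b y^(p-1) w vanishes. Thus
  (1,1) is orthogonal to (1,-a/b) but not conversely, and (1,-t) with t^(p-1) = a/b is
  orthogonal to (1,1) but not conversely, unless p = 2; for p = 1 the second role is played
  by (1,0). Complex scalars change nothing for real points, because replacing c by Re c can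
  only decrease the moduli.
*)

theory Submission
  imports Defs
begin

section \<open>The weighted plane\<close>

lemma abs_powr_ge_tangent:
  fixes p x z :: real
  assumes p: "1 \<le> p" and x: "0 < x"
  shows "x powr p + p * x powr (p - 1) * (z - x) \<le> \<bar>z\<bar> powr p"
proof (cases "p = 1")
  case True
  then show ?thesis using x by simp
next
  case False
  with p have p: "1 < p" by simp
  define q where "q = p / (p - 1)"
  have q: "1 < q" "1 / p + 1 / q = 1" using p by (auto simp: q_def field_simps)
  have "\<bar>z\<bar> * x powr (p - 1) \<le> \<bar>z\<bar> powr p / p + (x powr (p - 1)) powr q / q"
    by (rule Youngs_inequality[OF p q]) auto
  moreover have "(x powr (p - 1)) powr q = x powr p"
    using p by (simp add: powr_powr q_def)
  ultimately have "p * (\<bar>z\<bar> * x powr (p - 1)) \<le> \<bar>z\<bar> powr p + (p - 1) * x powr p"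
    using p by (simp add: q_def field_simps)
  moreover have "p * (z * x powr (p - 1)) \<le> p * (\<bar>z\<bar> * x powr (p - 1))"
    using p by (intro mult_left_mono mult_right_mono) auto
  moreover have "x powr p = x * x powr (p - 1)"
    using x powr_add[of x 1 "p - 1"] by simp
  ultimately show ?thesis by (simp add: algebra_simps)
qed

definition lp2_norm_powr :: "real \<Rightarrow> real \<Rightarrow> real \<Rightarrow> 'v::real_normed_vector \<Rightarrow> 'v \<Rightarrow> real" where
  "lp2_norm_powr p a b x y = norm x powr p * a + norm y powr p * b"

definition lp2_bj :: "real \<Rightarrow> real \<Rightarrow> real \<Rightarrow> real \<Rightarrow> real \<Rightarrow> real \<Rightarrow> real \<Rightarrow> bool" where
  "lp2_bj p a b x y u w \<longleftrightarrow>
     (\<forall>c::real. lp2_norm_powr p a b x y \<le> lp2_norm_powr p a b (x + c * u) (y + c * w))"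

lemma lp2_bj_minus_snd: "lp2_bj p a b x (- y) u (- w) \<longleftrightarrow> lp2_bj p a b x y u w"
proof -
  have "norm (- y + c * - w) = norm (y + c * w)" for c :: real
    by (metis minus_add_distrib mult_minus_right norm_minus_cancel)
  then show ?thesis by (simp add: lp2_bj_def lp2_norm_powr_def)
qed

lemma lp2_norm_powr_ge_tangent:
  assumes p: "1 \<le> p" and "0 < x" "0 < y" "0 \<le> a" "0 \<le> b"
  shows "lp2_norm_powr p a b x y + p * c * (x powr (p - 1) * u * a + y powr (p - 1) * w * b)
    \<le> lp2_norm_powr p a b (x + c * u) (y + c * w)"
proof -
  have "(x powr p + p * x powr (p - 1) * (c * u)) * a \<le> \<bar>x + c * u\<bar> powr p * a"
    using abs_powr_ge_tangent[OF p \<open>0 < x\<close>, of "x + c * u"] assms by (intro mult_right_mono) auto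
  moreover have "(y powr p + p * y powr (p - 1) * (c * w)) * b \<le> \<bar>y + c * w\<bar> powr p * b"
    using abs_powr_ge_tangent[OF p \<open>0 < y\<close>, of "y + c * w"] assms by (intro mult_right_mono) auto
  ultimately show ?thesis
    using assms by (simp add: lp2_norm_powr_def algebra_simps)
qed

text \<open>At a point with positive coordinates the norm is differentiable, so orthogonality
  is the vanishing of the directional derivative, which is p times this slope.\<close>
lemma lp2_bj_iff_slope:
  assumes p: "1 \<le> p" and x: "0 < x" and y: "0 < y" and "0 \<le> a" "0 \<le> b"
  shows "lp2_bj p a b x y u w \<longleftrightarrow> x powr (p - 1) * u * a + y powr (p - 1) * w * b = 0"
    (is "_ \<longleftrightarrow> ?s = 0")
proof
  assume bj: "lp2_bj p a b x y u w"
  define \<phi> where "\<phi> c = (x + c * u) powr p * a + (y + c * w) powr p * b" for c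
  have "(\<phi> has_real_derivative p * ?s) (at 0)"
    unfolding \<phi>_def using x y by (auto intro!: derivative_eq_intros simp: algebra_simps)
  moreover define d where "d = min (x / (\<bar>u\<bar> + 1)) (y / (\<bar>w\<bar> + 1))"
  have "0 < d" using x y by (simp add: d_def)
  moreover have "\<phi> 0 \<le> \<phi> c" if "\<bar>0 - c\<bar> < d" for c
  proof -
    have "\<bar>c * u\<bar> < x" "\<bar>c * w\<bar> < y"
      using that x y by (auto simp: d_def abs_mult field_simps
          intro: order.strict_trans1[OF mult_left_mono[of "\<bar>u\<bar>" "\<bar>u\<bar> + 1"]])
    then show ?thesis
      using bj x y unfolding lp2_bj_def lp2_norm_powr_def \<phi>_def
      by (auto dest: spec[of _ c])
  qed
  ultimately have "p * ?s = 0" by (intro DERIV_local_min) auto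
  then show "?s = 0" using p by simp
next
  assume "?s = 0"
  then show "lp2_bj p a b x y u w"
    using lp2_norm_powr_ge_tangent[OF assms, where u = u and w = w] by (simp add: lp2_bj_def)
qed

lemma lp2_not_left_symmetric:
  assumes p: "1 \<le> p" "p \<noteq> 2" and ab: "0 < a" "0 < b" "a \<noteq> b"
  obtains u w where "lp2_bj p a b 1 1 u w" "\<not> lp2_bj p a b u w 1 1"
proof
  show "lp2_bj p a b 1 1 1 (- (a / b))"
    using p ab by (simp add: lp2_bj_iff_slope)
  have "(a / b) powr (p - 1) \<noteq> (a / b) powr 1"
    using p ab powr_inj[of "a / b" "p - 1" 1] by auto
  then have "a - (a / b) powr (p - 1) * b \<noteq> 0"
    using ab by (auto simp: field_simps)
  then have "\<not> lp2_bj p a b 1 (a / b) 1 (- 1)"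
    using p ab by (simp add: lp2_bj_iff_slope)
  then show "\<not> lp2_bj p a b 1 (- (a / b)) 1 1"
    using lp2_bj_minus_snd[of p a b 1 "a / b" 1 "- 1"] by simp
qed

lemma lp2_not_right_symmetric:
  assumes p: "1 \<le> p" "p \<noteq> 2" and ab: "0 < a" "a < b"
  obtains u w where "lp2_bj p a b u w 1 1" "\<not> lp2_bj p a b 1 1 u w"
proof (cases "p = 1")
  case True
  show ?thesis
  proof
    have "a \<le> \<bar>1 + c\<bar> * a + \<bar>c\<bar> * b" for c :: real
    proof -
      have "1 \<le> \<bar>1 + c\<bar> + \<bar>c\<bar>" by arith
      then show ?thesis
        using ab mult_right_mono[of 1 "\<bar>1 + c\<bar> + \<bar>c\<bar>" a] mult_left_mono[of a b "\<bar>c\<bar>"]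
        by (simp add: algebra_simps)
    qed
    then show "lp2_bj p a b 1 0 1 1"
      using True by (simp add: lp2_bj_def lp2_norm_powr_def)
    have "lp2_norm_powr p a b (1 + (- 1) * 1 :: real) (1 + (- 1) * 0) < lp2_norm_powr p a b (1 :: real) 1"
      using True ab by (simp add: lp2_norm_powr_def)
    then show "\<not> lp2_bj p a b 1 1 1 0"
      unfolding lp2_bj_def by (meson not_le)
  qed
next
  case False
  with p have p1: "1 < p" by simp
  define t where "t = (a / b) powr (1 / (p - 1))"
  have t: "0 < t" using ab by (simp add: t_def)
  show ?thesis
  proof
    have "t powr (p - 1) = a / b"
      using p1 ab by (simp add: t_def powr_powr)
    then have "lp2_bj p a b 1 t 1 (- 1)"
      using p t ab by (simp add: lp2_bj_iff_slope)
    then show "lp2_bj p a b 1 (- t) 1 1"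
      using lp2_bj_minus_snd[of p a b 1 t 1 "- 1"] by simp
    have "t \<noteq> (a / b) powr 1"
      using p p1 ab powr_inj[of "a / b" "1 / (p - 1)" 1] by (auto simp: t_def field_simps)
    then have "a - t * b \<noteq> 0"
      using ab by (auto simp: field_simps)
    then show "\<not> lp2_bj p a b 1 1 1 (- t)"
      using p t ab by (simp add: lp2_bj_iff_slope)
  qed
qed

lemma lp2_bj_complex_iff:
  assumes "0 < p" "0 \<le> a" "0 \<le> b"
  shows "(\<forall>c::complex. lp2_norm_powr p a b x y
            \<le> lp2_norm_powr p a b (of_real x + c * of_real u) (of_real y + c * of_real w))
    \<longleftrightarrow> lp2_bj p a b x y u w"
proof
  assume bjC: "\<forall>c::complex. lp2_norm_powr p a b x y
            \<le> lp2_norm_powr p a b (of_real x + c * of_real u) (of_real y + c * of_real w)"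
  show "lp2_bj p a b x y u w"
    unfolding lp2_bj_def
  proof
    fix c :: real
    from bjC have "lp2_norm_powr p a b x y
        \<le> lp2_norm_powr p a b (of_real (x + c * u)) (of_real (y + c * w) :: complex)"
      by (simp only: of_real_add of_real_mult)
    then show "lp2_norm_powr p a b x y \<le> lp2_norm_powr p a b (x + c * u) (y + c * w)"
      by (simp add: lp2_norm_powr_def del: of_real_add of_real_mult)
  qed
next
  assume bj: "lp2_bj p a b x y u w"
  show "\<forall>c::complex. lp2_norm_powr p a b x y
            \<le> lp2_norm_powr p a b (of_real x + c * of_real u) (of_real y + c * of_real w)"
  proof
    fix c :: complex
    have "\<bar>x + Re c * u\<bar> \<le> cmod (of_real x + c * of_real u)"
      "\<bar>y + Re c * w\<bar> \<le> cmod (of_real y + c * of_real w)"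
      using abs_Re_le_cmod[of "of_real x + c * of_real u"] abs_Re_le_cmod[of "of_real y + c * of_real w"]
      by simp_all
    then have "lp2_norm_powr p a b (x + Re c * u) (y + Re c * w)
        \<le> lp2_norm_powr p a b (of_real x + c * of_real u) (of_real y + c * of_real w)"
      using assms unfolding lp2_norm_powr_def
      by (intro add_mono mult_right_mono powr_mono2) auto
    moreover have "lp2_norm_powr p a b x y \<le> lp2_norm_powr p a b (x + Re c * u) (y + Re c * w)"
      using bj unfolding lp2_bj_def by blast
    ultimately show "lp2_norm_powr p a b x y
        \<le> lp2_norm_powr p a b (of_real x + c * of_real u) (of_real y + c * of_real w)"
      by linarith
  qed
qed

lemma strongly_measurable_AE_borel:
  assumes "strongly_measurable M f"
  obtains g where "g \<in> borel_measurable M" "AE x in M. g x = f x"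
proof -
  from assms obtain s where s: "\<And>n. simple_function M (s n)" "AE x in M. (\<lambda>n. s n x) \<longlonglongrightarrow> f x"
    unfolding strongly_measurable_def by blast
  from AE_E[OF s(2)] obtain N
    where N: "{x\<in>space M. \<not> (\<lambda>n. s n x) \<longlonglongrightarrow> f x} \<subseteq> N" "emeasure M N = 0" "N \<in> sets M"
    by blast
  define g where "g x = (if x \<in> N then 0 else f x)" for x
  have "g \<in> borel_measurable M"
  proof (rule borel_measurable_LIMSEQ_metric[where f="\<lambda>n x. if x \<in> N then 0 else s n x"])
    show "(\<lambda>x. if x \<in> N then 0 else s n x) \<in> borel_measurable M" for n
      using borel_measurable_simple_function[OF s(1)] N(3) by (intro measurable_If_set) auto
    show "(\<lambda>n. if x \<in> N then 0 else s n x) \<longlonglongrightarrow> g x" if "x \<in> space M" for x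
      using N(1) that by (cases "x \<in> N") (auto simp: g_def)
  qed
  moreover have "AE x in M. g x = f x"
    using AE_not_in[of N M] N by (auto simp: g_def null_sets_def elim!: AE_mp)
  ultimately show ?thesis by (rule that)
qed

lemma strongly_measurable_scaleR_simple:
  assumes "simple_function M h" "strongly_measurable M f"
  shows "strongly_measurable M (\<lambda>x. h x *\<^sub>R f x)"
proof -
  from assms(2) obtain s where s: "\<And>n. simple_function M (s n)" "AE x in M. (\<lambda>n. s n x) \<longlonglongrightarrow> f x"
    unfolding strongly_measurable_def by blast
  show ?thesis
    unfolding strongly_measurable_def
  proof (intro exI[of _ "\<lambda>n x. h x *\<^sub>R s n x"] conjI allI)
    show "simple_function M (\<lambda>x. h x *\<^sub>R s n x)" for n
      using assms(1) s(1) by (rule simple_function_compose2)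
    show "AE x in M. (\<lambda>n. h x *\<^sub>R s n x) \<longlonglongrightarrow> h x *\<^sub>R f x"
      using s(2) by (rule AE_mp) (auto intro!: AE_I2 tendsto_scaleR)
  qed
qed

section \<open>Isometric copies of the plane in L^p\<close>

lemma powr_inverse_le_iff:
  fixes x y p :: real
  assumes "0 < p" "0 \<le> x" "0 \<le> y"
  shows "x powr (1 / p) \<le> y powr (1 / p) \<longleftrightarrow> x \<le> y"
  using assms by (meson divide_pos_pos not_le powr_less_mono2 powr_mono2 zero_less_one less_imp_le)

lemma norm_add_cscale:
  assumes "complex_structure J"
  shows "norm (r *\<^sub>R v + cscale J c (s *\<^sub>R v)) = cmod (of_real r + c * of_real s) * norm v"
proof -
  from assms have "linear J" and norm_J: "\<And>a b v. norm (a *\<^sub>R v + b *\<^sub>R J v) = cmod (Complex a b) * norm v"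
    unfolding complex_structure_def by auto
  have "r *\<^sub>R v + cscale J c (s *\<^sub>R v) = (r + Re c * s) *\<^sub>R v + (Im c * s) *\<^sub>R J v"
    unfolding cscale_def using linear_scale[OF \<open>linear J\<close>, of s v] by (simp add: algebra_simps)
  also have "norm \<dots> = cmod (Complex (r + Re c * s) (Im c * s)) * norm v"
    by (rule norm_J)
  also have "Complex (r + Re c * s) (Im c * s) = of_real r + c * of_real s"
    by (simp add: complex_eq_iff)
  finally show ?thesis .
qed

locale Lp_split =
  fixes M :: "'a measure" and p :: real and f :: "'a \<Rightarrow> 'b::real_normed_vector"
    and A :: "'a set" and a b :: real
  assumes p_pos: "0 < p" and f_Lp: "f \<in> Lp M p" and A_sets: "A \<in> sets M"
    and mass_A: "(\<integral>\<^sup>+x\<in>A. ennreal (norm (f x) powr p) \<partial>M) = ennreal a"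
    and mass_compl: "(\<integral>\<^sup>+x\<in>space M - A. ennreal (norm (f x) powr p) \<partial>M) = ennreal b"
    and masses: "0 < a" "a < b"
begin

definition scaled :: "real \<Rightarrow> real \<Rightarrow> 'a \<Rightarrow> 'b" where
  "scaled \<alpha> \<beta> x = (if x \<in> A then \<alpha> else \<beta>) *\<^sub>R f x"

lemma scaled_1_1: "scaled 1 1 = f"
  by (simp add: fun_eq_iff scaled_def)

lemma nn_integral_norm_powr:
  fixes k1 k2 :: "'v::real_normed_vector"
  assumes u: "\<And>x. x \<in> space M \<Longrightarrow> norm (u x) = (if x \<in> A then norm k1 else norm k2) * norm (f x)"
  shows "(\<integral>\<^sup>+x. ennreal (norm (u x) powr p) \<partial>M) = ennreal (lp2_norm_powr p a b k1 k2)"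
proof -
  obtain g where g[measurable]: "g \<in> borel_measurable M" and g_f: "AE x in M. g x = f x"
    using f_Lp strongly_measurable_AE_borel unfolding Lp_def by blast
  note [measurable] = A_sets
  define W where "W x = ennreal (norm (g x) powr p)" for x
  have W_meas[measurable]: "W \<in> borel_measurable M" unfolding W_def by measurable
  have mass: "(\<integral>\<^sup>+x. W x * indicator E x \<partial>M) = (\<integral>\<^sup>+x\<in>E. ennreal (norm (f x) powr p) \<partial>M)" for E
    using g_f by (intro nn_integral_cong_AE) (auto simp: W_def elim!: AE_mp)
  have "(\<integral>\<^sup>+x. ennreal (norm (u x) powr p) \<partial>M)
      = (\<integral>\<^sup>+x. ennreal (norm k1 powr p) * (W x * indicator A x)
              + ennreal (norm k2 powr p) * (W x * indicator (space M - A) x) \<partial>M)"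
  proof (intro nn_integral_cong_AE, use g_f in \<open>elim AE_mp\<close>, intro AE_I2 impI)
    fix x assume "x \<in> space M" "g x = f x"
    then show "ennreal (norm (u x) powr p) = ennreal (norm k1 powr p) * (W x * indicator A x)
        + ennreal (norm k2 powr p) * (W x * indicator (space M - A) x)"
      using u[of x] by (simp add: W_def indicator_def powr_mult ennreal_mult')
  qed
  also have "\<dots> = ennreal (norm k1 powr p) * ennreal a + ennreal (norm k2 powr p) * ennreal b"
    by (simp add: nn_integral_add nn_integral_cmult mass mass_A mass_compl)
  also have "\<dots> = ennreal (lp2_norm_powr p a b k1 k2)"
    using masses by (simp add: lp2_norm_powr_def ennreal_mult ennreal_plus)
  finally show ?thesis .
qed

lemma Lp_norm_eq:
  fixes k1 k2 :: "'v::real_normed_vector"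
  assumes "\<And>x. x \<in> space M \<Longrightarrow> norm (u x) = (if x \<in> A then norm k1 else norm k2) * norm (f x)"
  shows "Lp_norm M p u = lp2_norm_powr p a b k1 k2 powr (1 / p)"
  using nn_integral_norm_powr[OF assms] masses
  by (simp add: Lp_norm_def lp2_norm_powr_def del: ennreal_plus)

lemma scaled_Lp: "scaled \<alpha> \<beta> \<in> Lp M p"
proof -
  have "simple_function M (\<lambda>x. if x \<in> A then \<alpha> else \<beta>)"
    using A_sets by (intro simple_function_If_set) auto
  then have "strongly_measurable M (scaled \<alpha> \<beta>)"
    unfolding scaled_def using f_Lp by (intro strongly_measurable_scaleR_simple) (auto simp: Lp_def)
  moreover have "(\<integral>\<^sup>+x. ennreal (norm (scaled \<alpha> \<beta> x) powr p) \<partial>M) < \<infinity>"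
    by (subst nn_integral_norm_powr[of _ \<alpha> \<beta>]) (auto simp: scaled_def)
  ultimately show ?thesis by (simp add: Lp_def)
qed

lemma lp2_norm_powr_nonneg: "0 \<le> lp2_norm_powr p a b x y"
  using masses by (simp add: lp2_norm_powr_def)

lemma Lp_bj_scaled_iff: "Lp_bj M p (scaled x y) (scaled u w) \<longleftrightarrow> lp2_bj p a b x y u w"
proof -
  have "Lp_norm M p (\<lambda>z. scaled x y z + c *\<^sub>R scaled u w z)
      = lp2_norm_powr p a b (x + c * u) (y + c * w) powr (1 / p)" for c :: real
    by (rule Lp_norm_eq) (auto simp: scaled_def scaleR_add_left[symmetric])
  moreover have "Lp_norm M p (scaled x y) = lp2_norm_powr p a b x y powr (1 / p)"
    by (rule Lp_norm_eq) (auto simp: scaled_def)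
  ultimately show ?thesis
    unfolding Lp_bj_def lp2_bj_def
    by (simp only: powr_inverse_le_iff[OF p_pos lp2_norm_powr_nonneg lp2_norm_powr_nonneg])
qed

lemma Lp_bjC_scaled_iff:
  assumes J: "complex_structure J"
  shows "Lp_bjC J M p (scaled x y) (scaled u w) \<longleftrightarrow> lp2_bj p a b x y u w"
proof -
  have "Lp_norm M p (\<lambda>z. scaled x y z + cscale J c (scaled u w z))
      = lp2_norm_powr p a b (of_real x + c * of_real u) (of_real y + c * of_real w) powr (1 / p)" for c
    by (rule Lp_norm_eq) (simp add: scaled_def norm_add_cscale[OF J])
  moreover have "Lp_norm M p (scaled x y) = lp2_norm_powr p a b x y powr (1 / p)"
    by (rule Lp_norm_eq) (auto simp: scaled_def)
  ultimately have "Lp_bjC J M p (scaled x y) (scaled u w) \<longleftrightarrow> (\<forall>c::complex.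
      lp2_norm_powr p a b x y \<le> lp2_norm_powr p a b (of_real x + c * of_real u) (of_real y + c * of_real w))"
    unfolding Lp_bjC_def
    by (simp only: powr_inverse_le_iff[OF p_pos lp2_norm_powr_nonneg lp2_norm_powr_nonneg])
  also have "\<dots> \<longleftrightarrow> lp2_bj p a b x y u w"
    using masses by (intro lp2_bj_complex_iff p_pos) auto
  finally show ?thesis .
qed

lemma not_Lp_left_symmetric:
  assumes "1 \<le> p" "p \<noteq> 2"
  shows "\<not> Lp_left_symmetric M p f"
proof
  obtain u w where uw: "lp2_bj p a b 1 1 u w" "\<not> lp2_bj p a b u w 1 1"
    using lp2_not_left_symmetric[OF assms masses(1) less_trans[OF masses] less_imp_neq[OF masses(2)]] .
  assume "Lp_left_symmetric M p f"
  moreover have "Lp_bj M p f (scaled u w)"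
    using Lp_bj_scaled_iff[of 1 1 u w] uw(1) by (simp only: scaled_1_1)
  ultimately have "Lp_bj M p (scaled u w) f"
    using scaled_Lp unfolding Lp_left_symmetric_def by blast
  with uw(2) show False
    using Lp_bj_scaled_iff[of u w 1 1] by (metis scaled_1_1)
qed

lemma not_Lp_right_symmetric:
  assumes "1 \<le> p" "p \<noteq> 2"
  shows "\<not> Lp_right_symmetric M p f"
proof
  obtain u w where uw: "lp2_bj p a b u w 1 1" "\<not> lp2_bj p a b 1 1 u w"
    using lp2_not_right_symmetric[OF assms masses] .
  assume "Lp_right_symmetric M p f"
  moreover have "Lp_bj M p (scaled u w) f"
    using Lp_bj_scaled_iff[of u w 1 1] uw(1) by (simp only: scaled_1_1)
  ultimately have "Lp_bj M p f (scaled u w)"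
    using scaled_Lp unfolding Lp_right_symmetric_def by blast
  with uw(2) show False
    using Lp_bj_scaled_iff[of 1 1 u w] by (metis scaled_1_1)
qed

lemma not_Lp_left_symmetricC:
  assumes "1 \<le> p" "p \<noteq> 2" and J: "complex_structure J"
  shows "\<not> Lp_left_symmetricC J M p f"
proof
  obtain u w where uw: "lp2_bj p a b 1 1 u w" "\<not> lp2_bj p a b u w 1 1"
    using lp2_not_left_symmetric[OF assms(1,2) masses(1) less_trans[OF masses] less_imp_neq[OF masses(2)]] .
  assume "Lp_left_symmetricC J M p f"
  moreover have "Lp_bjC J M p f (scaled u w)"
    using Lp_bjC_scaled_iff[OF J, of 1 1 u w] uw(1) by (simp only: scaled_1_1)
  ultimately have "Lp_bjC J M p (scaled u w) f"
    using scaled_Lp unfolding Lp_left_symmetricC_def by blast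
  with uw(2) show False
    using Lp_bjC_scaled_iff[OF J, of u w 1 1] by (metis scaled_1_1)
qed

lemma not_Lp_right_symmetricC:
  assumes "1 \<le> p" "p \<noteq> 2" and J: "complex_structure J"
  shows "\<not> Lp_right_symmetricC J M p f"
proof
  obtain u w where uw: "lp2_bj p a b u w 1 1" "\<not> lp2_bj p a b 1 1 u w"
    using lp2_not_right_symmetric[OF assms(1,2) masses] .
  assume "Lp_right_symmetricC J M p f"
  moreover have "Lp_bjC J M p (scaled u w) f"
    using Lp_bjC_scaled_iff[OF J, of u w 1 1] uw(1) by (simp only: scaled_1_1)
  ultimately have "Lp_bjC J M p f (scaled u w)"
    using scaled_Lp unfolding Lp_right_symmetricC_def by blast
  with uw(2) show False
    using Lp_bjC_scaled_iff[OF J, of 1 1 u w] by (metis scaled_1_1)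
qed

end

section \<open>Non-atomic measures\<close>

lemma (in finite_measure) non_atomic_proper_subset:
  assumes "non_atomic M" "C \<in> sets M" "0 < measure M C"
  obtains D where "D \<in> sets M" "D \<subseteq> C" "0 < measure M D" "measure M D < measure M C"
proof -
  from assms obtain D where D: "D \<in> sets M" "D \<subseteq> C" "emeasure M D \<noteq> 0" "emeasure M D \<noteq> emeasure M C"
    unfolding non_atomic_def by (auto simp: emeasure_eq_measure)
  moreover have "measure M D \<le> measure M C"
    using D assms by (intro finite_measure_mono) auto
  moreover have "measure M D \<noteq> 0" "measure M D \<noteq> measure M C"
    using D(3,4) by (auto simp: emeasure_eq_measure)
  ultimately show ?thesis
    using that[of D] by (simp add: less_le)
qed

lemma (in finite_measure) non_atomic_unequal_split:
  assumes "non_atomic M" "0 < measure M (space M)"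
  obtains D where "D \<in> sets M" "0 < measure M D" "measure M D < measure M (space M - D)"
proof -
  have compl: "measure M (space M - E) = measure M (space M) - measure M E" if "E \<in> sets M" for E
    using that sets.sets_into_space by (intro finite_measure_Diff) auto
  obtain D where D: "D \<in> sets M" "0 < measure M D" "measure M D < measure M (space M)"
    using non_atomic_proper_subset[OF assms(1) sets.top assms(2)] by blast
  consider "measure M D < measure M (space M - D)" | "measure M (space M - D) < measure M D"
    | "measure M D = measure M (space M - D)"
    by linarith
  then show ?thesis
  proof cases
    case 1
    with D show ?thesis by (intro that) auto
  next
    case 2
    moreover have "space M - (space M - D) = D"
      using sets.sets_into_space[OF D(1)] by blast
    ultimately show ?thesis
      using D compl[OF D(1)] by (intro that[of "space M - D"]) auto
  next
    case 3
    \<comment> \<open>halves of equal mass: shrinking one of them breaks the tie\<close>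
    obtain D' where D': "D' \<in> sets M" "0 < measure M D'" "measure M D' < measure M D"
      using non_atomic_proper_subset[OF assms(1) D(1,2)] by blast
    have "measure M D' < measure M (space M - D')"
      using D' 3 compl[OF D(1)] compl[OF D'(1)] by linarith
    with D'(1,2) show ?thesis by (rule that)
  qed
qed

lemma non_atomic_density:
  assumes na: "non_atomic M" and W[measurable]: "W \<in> borel_measurable M"
    and fin: "(\<integral>\<^sup>+x. W x \<partial>M) \<noteq> \<infinity>"
  shows "non_atomic (density M W)"
proof -
  let ?\<nu> = "density M W"
  have "emeasure ?\<nu> (space ?\<nu>) = (\<integral>\<^sup>+x. W x \<partial>M)"
    by (auto simp: emeasure_density intro!: nn_integral_cong)
  then have "emeasure ?\<nu> (space ?\<nu>) \<noteq> \<infinity>"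
    using fin by simp
  then interpret \<nu>: finite_measure ?\<nu> ..
  have pos: "emeasure ?\<nu> E \<noteq> 0"
    if E: "E \<in> sets M" "\<forall>x\<in>E. W x \<noteq> 0" "emeasure M E \<noteq> 0" for E
  proof
    assume "emeasure ?\<nu> E = 0"
    then have "AE x in M. x \<in> E \<longrightarrow> W x = 0"
      using null_sets_density_iff[OF W, of E] E by (auto simp: null_sets_def)
    then have "AE x in M. x \<notin> E" using E by (auto elim: AE_mp)
    then show False using E AE_iff_null_sets[of E M] by (simp add: null_sets_def)
  qed
  show ?thesis
    unfolding non_atomic_def sets_density
  proof (intro notI, elim bexE conjE)
    fix A assume A: "A \<in> sets M" "0 < emeasure ?\<nu> A"
      and atom: "\<forall>B\<in>sets M. B \<subseteq> A \<longrightarrow> emeasure ?\<nu> B = 0 \<or> emeasure ?\<nu> B = emeasure ?\<nu> A"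
    define A' where "A' = {x\<in>A. W x \<noteq> 0}"
    have A'[measurable]: "A' \<in> sets M" using A by (simp add: A'_def)
    have "emeasure M A' \<noteq> 0"
    proof
      assume "emeasure M A' = 0"
      then have "AE x in M. x \<in> A \<longrightarrow> W x = 0"
        using AE_not_in[of A' M] A' by (auto simp: null_sets_def A'_def elim: AE_mp)
      then show False using A null_sets_density_iff[OF W, of A] by (auto simp: null_sets_def)
    qed
    then obtain B where B: "B \<in> sets M" "B \<subseteq> A'" "emeasure M B \<noteq> 0" "emeasure M B \<noteq> emeasure M A'"
      using na A' unfolding non_atomic_def by (auto simp: zero_less_iff_neq_zero)
    have "emeasure M (A' - B) \<noteq> 0"
    proof
      assume "emeasure M (A' - B) = 0"
      then have "emeasure M A' \<le> emeasure M B"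
        using emeasure_subadditive[of B M "A' - B"] B A' by (simp add: Un_absorb1)
      then show False using B A' emeasure_mono[of B A' M] by simp
    qed
    then have "emeasure ?\<nu> (A' - B) \<noteq> 0"
      using A' B by (intro pos) (auto simp: A'_def)
    moreover have "emeasure ?\<nu> (A' - B) \<le> emeasure ?\<nu> (A - B)"
      using A B by (intro emeasure_mono) (auto simp: A'_def)
    ultimately have "0 < measure ?\<nu> (A - B)"
      by (simp add: \<nu>.emeasure_eq_measure) (use measure_nonneg[of ?\<nu> "A' - B"] in linarith)
    moreover have "measure ?\<nu> (A - B) = measure ?\<nu> A - measure ?\<nu> B"
      using A B by (intro \<nu>.finite_measure_Diff) (auto simp: A'_def)
    moreover have "emeasure ?\<nu> B \<noteq> 0"
      using B by (intro pos) (auto simp: A'_def)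
    ultimately show False
      using atom B(1,2) by (auto simp: A'_def \<nu>.emeasure_eq_measure)
  qed
qed

lemma Lp_split_exists:
  fixes f :: "'a \<Rightarrow> 'b::real_normed_vector"
  assumes na: "non_atomic M" and f: "f \<in> Lp M p" and p: "0 < p" and nz: "Lp_norm M p f \<noteq> 0"
  obtains A a b where "Lp_split M p f A a b"
proof -
  obtain g where g[measurable]: "g \<in> borel_measurable M" and g_f: "AE x in M. g x = f x"
    using f strongly_measurable_AE_borel unfolding Lp_def by blast
  define W where "W x = ennreal (norm (g x) powr p)" for x
  have W[measurable]: "W \<in> borel_measurable M" unfolding W_def by measurable
  let ?\<nu> = "density M W"
  have mass: "emeasure ?\<nu> E = (\<integral>\<^sup>+x\<in>E. ennreal (norm (f x) powr p) \<partial>M)" if "E \<in> sets M" for E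
    using that g_f by (simp add: emeasure_density) (intro nn_integral_cong_AE; auto simp: W_def elim!: AE_mp)
  have total: "emeasure ?\<nu> (space ?\<nu>) = (\<integral>\<^sup>+x. ennreal (norm (f x) powr p) \<partial>M)"
    using mass[OF sets.top] by (auto intro!: nn_integral_cong)
  also have "\<dots> < \<infinity>"
    using f by (simp add: Lp_def)
  finally interpret \<nu>: finite_measure ?\<nu> by (intro finite_measureI) simp
  have "(\<integral>\<^sup>+x. ennreal (norm (f x) powr p) \<partial>M) \<noteq> 0"
    using nz p by (auto simp: Lp_norm_def)
  then have "measure ?\<nu> (space ?\<nu>) \<noteq> 0"
    using total by (auto simp: \<nu>.emeasure_eq_measure)
  then have "0 < measure ?\<nu> (space ?\<nu>)"
    using measure_nonneg[of ?\<nu> "space ?\<nu>"] by linarith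
  moreover have "non_atomic ?\<nu>"
  proof (rule non_atomic_density[OF na W])
    show "(\<integral>\<^sup>+x. W x \<partial>M) \<noteq> \<infinity>"
      using total \<nu>.emeasure_finite[of "space ?\<nu>"] by (simp add: emeasure_density)
  qed
  ultimately obtain D where D: "D \<in> sets M" "0 < measure ?\<nu> D" "measure ?\<nu> D < measure ?\<nu> (space M - D)"
    using \<nu>.non_atomic_unequal_split by auto
  show ?thesis
  proof (rule that, unfold_locales)
    show "(\<integral>\<^sup>+x\<in>D. ennreal (norm (f x) powr p) \<partial>M) = ennreal (measure ?\<nu> D)"
      using D mass by (simp add: \<nu>.emeasure_eq_measure)
    show "(\<integral>\<^sup>+x\<in>space M - D. ennreal (norm (f x) powr p) \<partial>M) = ennreal (measure ?\<nu> (space M - D))"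
      using D mass[of "space M - D"] by (simp add: \<nu>.emeasure_eq_measure)
  qed (use p f D in auto)
qed

lemma Lp_no_nonzero_symmetric_points:
  fixes f :: "'a \<Rightarrow> 'b::real_normed_vector"
  assumes "non_atomic M" "f \<in> Lp M p" "Lp_norm M p f \<noteq> 0" "1 \<le> p" "p \<noteq> 2"
  shows "\<not> Lp_left_symmetric M p f" "\<not> Lp_right_symmetric M p f"
    and "complex_structure J \<Longrightarrow> \<not> Lp_left_symmetricC J M p f"
    and "complex_structure J \<Longrightarrow> \<not> Lp_right_symmetricC J M p f"
proof -
  obtain A a b where "Lp_split M p f A a b"
    using Lp_split_exists[OF assms(1,2) _ assms(3)] assms(4) by auto
  then interpret Lp_split M p f A a b .
  show "\<not> Lp_left_symmetric M p f" "\<not> Lp_right_symmetric M p f"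
    using not_Lp_left_symmetric not_Lp_right_symmetric assms(4,5) by auto
  show "complex_structure J \<Longrightarrow> \<not> Lp_left_symmetricC J M p f"
    "complex_structure J \<Longrightarrow> \<not> Lp_right_symmetricC J M p f"
    using not_Lp_left_symmetricC not_Lp_right_symmetricC assms(4,5) by auto
qed

theorem corollary3p15:
  fixes M :: "'a measure"
  assumes "complete_measure M"
    and "non_atomic M"
  shows
    "(sigma_finite_measure M \<and> frechet_norm TYPE('b::banach) \<longrightarrow>
        (\<forall>f::'a \<Rightarrow> 'b. f \<in> Lp M 1 \<and> Lp_norm M 1 f \<noteq> 0 \<longrightarrow> \<not> Lp_left_symmetric M 1 f))
     \<and> (frechet_norm TYPE('b) \<longrightarrow>
        (\<forall>f::'a \<Rightarrow> 'b. f \<in> Lp M 1 \<and> Lp_norm M 1 f \<noteq> 0 \<longrightarrow> \<not> Lp_right_symmetric M 1 f))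
     \<and> (\<forall>p::real. 1 < p \<and> p \<noteq> 2 \<and> frechet_norm TYPE('b) \<longrightarrow>
        (\<forall>f::'a \<Rightarrow> 'b. f \<in> Lp M p \<and> Lp_norm M p f \<noteq> 0 \<longrightarrow>
           \<not> Lp_left_symmetric M p f \<and> \<not> Lp_right_symmetric M p f))
     \<and> (\<forall>(p::real) (J::'b \<Rightarrow> 'b). 1 < p \<and> p \<noteq> 2 \<and> frechet_norm TYPE('b) \<and> complex_structure J \<longrightarrow>
        (\<forall>f::'a \<Rightarrow> 'b. f \<in> Lp M p \<and> Lp_norm M p f \<noteq> 0 \<longrightarrow>
           \<not> Lp_left_symmetricC J M p f \<and> \<not> Lp_right_symmetricC J M p f))"
  by (simp add: Lp_no_nonzero_symmetric_points assms(2))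

end
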